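(* Let $q_0>0$, $\alpha,\beta\in\mathbb{R}$, $\theta_+\in(0,\pi)$ with $\beta\neq2q_0\cos\theta_+$, and $$q(x,t)=q_0e^{i(\alpha t+\beta x)}\Big[\cos\theta_++i\sin\theta_+\tanh\Big(q_0\sin\theta_+\Big(x-\frac{\alpha t}{\beta-2q_0\cos\theta_+}\Big)\Big)\Big].$$ Define $s(x,t)=\int_x^\infty\partial_t\big(q(x',t)q(-x',-t)\big)\,dx'+\frac{\alpha\beta}{2}$. Then $q$ and $s$ are smooth, $q_{xt}+2sq=0$ on $\mathbb{R}^2$, $s_x=-\partial_t\big(q(x,t)q(-x,-t)\big)$, $s(-x,-t)=s(x,t)$, $s(x,t)\to\alpha\beta/2$ as $|x|\to\infty$, and $q(x,t)\to q_0e^{i(\alpha t+\beta x\pm\theta_+)}$ as $x\to\pm\infty$. *)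

theory Defs
  imports "HOL-Analysis.Analysis"
begin

definition partial_x :: "(real \<Rightarrow> real \<Rightarrow> complex) \<Rightarrow> real \<Rightarrow> real \<Rightarrow> complex" where
  "partial_x f x t = vector_derivative (\<lambda>y. f y t) (at x)"

definition partial_t :: "(real \<Rightarrow> real \<Rightarrow> complex) \<Rightarrow> real \<Rightarrow> real \<Rightarrow> complex" where
  "partial_t f x t = vector_derivative (\<lambda>y. f x y) (at t)"

fun iter_partial :: "bool list \<Rightarrow> (real \<Rightarrow> real \<Rightarrow> complex) \<Rightarrow> real \<Rightarrow> real \<Rightarrow> complex" where
  "iter_partial [] f = f"
| "iter_partial (b # bs) f = (if b then partial_x else partial_t) (iter_partial bs f)"

definition smooth2 :: "(real \<Rightarrow> real \<Rightarrow> complex) \<Rightarrow> bool" where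
  "smooth2 f \<longleftrightarrow> (\<forall>ds.
      continuous_on UNIV (\<lambda>(x, t). iter_partial ds f x t) \<and>
      (\<forall>x t. (\<lambda>y. iter_partial ds f y t) differentiable (at x) \<and>
             (\<lambda>y. iter_partial ds f x y) differentiable (at t)))"

end

theory Submission
  imports Defs "HOL-Computational_Algebra.Polynomial" "HOL-Real_Asymp.Real_Asymp"
begin

text \<open>Put k = q0 sin \<theta>, w = -k\<alpha>/(\<beta> - 2 q0 cos \<theta>) and T = tanh (k x + w t). The soliton q is
  a plane wave times a polynomial in T. Such "tanh waves" are closed under \<partial>x and \<partial>t (because
  T' = 1 - T^2) and under products, and the reflection (x, t) \<mapsto> (-x, -t) sends T to -T and
  conjugates the phase. Hence q(x,t) q(-x,-t) is a polynomial in T whose t-derivative is a multiple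
  of T (1 - T^2); integrating it over [x, \<infinity>) gives s = \<alpha>\<beta>/2 + w k (1 - T^2) explicitly. The
  equation q_xt + 2 s q = 0 becomes a polynomial identity in T, which is where the value of w is
  needed, and all limits follow from T \<rightarrow> \<plusminus>1.\<close>

definition tanh_wave :: "real \<Rightarrow> real \<Rightarrow> real \<Rightarrow> real \<Rightarrow> complex poly \<Rightarrow> real \<Rightarrow> real \<Rightarrow> complex" where
  "tanh_wave a b c d p x t = exp (\<i> * of_real (a * t + b * x)) * poly p (of_real (tanh (c * x + d * t)))"

definition wave_deriv_poly :: "real \<Rightarrow> real \<Rightarrow> complex poly \<Rightarrow> complex poly" where
  "wave_deriv_poly b c p = smult (\<i> * of_real b) p + smult (of_real c) (pderiv p * [:1, 0, -1:])"

lemma has_vector_derivative_wave_line: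
  "((\<lambda>y. exp (\<i> * of_real (A + B * y)) * poly p (of_real (tanh (C * y + E)))) has_vector_derivative
     exp (\<i> * of_real (A + B * y)) * poly (wave_deriv_poly B C p) (of_real (tanh (C * y + E)))) (at y)"
proof -
  have phase: "((\<lambda>y. \<i> * of_real (A + B * y)) has_vector_derivative \<i> * of_real B) (at y)"
    by (auto intro!: derivative_eq_intros)
  have exp_phase: "((exp \<circ> (\<lambda>y. \<i> * of_real (A + B * y))) has_vector_derivative
      \<i> * of_real B * exp (\<i> * of_real (A + B * y))) (at y)"
    by (rule field_vector_diff_chain_at[OF phase DERIV_exp])
  have tanh_line: "((\<lambda>y. of_real (tanh (C * y + E)) :: complex) has_vector_derivative
      of_real ((1 - tanh (C * y + E) ^ 2) * C)) (at y)"
    by (auto intro!: derivative_eq_intros has_vector_derivative_of_real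
        simp: cosh_real_pos[THEN less_imp_neq, symmetric])
  have poly_tanh: "((poly p \<circ> (\<lambda>y. of_real (tanh (C * y + E)) :: complex)) has_vector_derivative
      of_real ((1 - tanh (C * y + E) ^ 2) * C) * poly (pderiv p) (of_real (tanh (C * y + E)))) (at y)"
    by (rule field_vector_diff_chain_at[OF tanh_line poly_DERIV])
  show ?thesis
    by (rule has_vector_derivative_eq_rhs[OF has_vector_derivative_mult[OF exp_phase poly_tanh,
          unfolded o_def]])
       (simp add: wave_deriv_poly_def algebra_simps power2_eq_square)
qed

lemma tanh_wave_has_vector_derivative_x:
  "((\<lambda>y. tanh_wave a b c d p y t) has_vector_derivative tanh_wave a b c d (wave_deriv_poly b c p) x t) (at x)"
  using has_vector_derivative_wave_line[of "a * t" b p c "d * t" x]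
  by (simp add: tanh_wave_def)

lemma tanh_wave_has_vector_derivative_t:
  "((\<lambda>y. tanh_wave a b c d p x y) has_vector_derivative tanh_wave a b c d (wave_deriv_poly a d p) x t) (at t)"
  using has_vector_derivative_wave_line[of "b * x" a p d "c * x" t]
  by (simp add: tanh_wave_def algebra_simps)

lemma partial_x_tanh_wave: "partial_x (tanh_wave a b c d p) = tanh_wave a b c d (wave_deriv_poly b c p)"
  by (auto simp: partial_x_def fun_eq_iff intro!: vector_derivative_at tanh_wave_has_vector_derivative_x)

lemma partial_t_tanh_wave: "partial_t (tanh_wave a b c d p) = tanh_wave a b c d (wave_deriv_poly a d p)"
  by (auto simp: partial_t_def fun_eq_iff intro!: vector_derivative_at tanh_wave_has_vector_derivative_t)

lemma iter_partial_tanh_wave: "\<exists>p'. iter_partial ds (tanh_wave a b c d p) = tanh_wave a b c d p'"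
  by (induction ds) (auto simp: partial_x_tanh_wave partial_t_tanh_wave)

lemma continuous_on_tanh_wave: "continuous_on UNIV (\<lambda>(x, t). tanh_wave a b c d p x t)"
  unfolding tanh_wave_def case_prod_unfold
  by (intro continuous_intros) (metis cosh_real_pos less_irrefl)

lemma smooth2_tanh_wave: "smooth2 (tanh_wave a b c d p)"
  unfolding smooth2_def
proof (intro allI conjI)
  fix ds x t
  obtain p' where p': "iter_partial ds (tanh_wave a b c d p) = tanh_wave a b c d p'"
    using iter_partial_tanh_wave by blast
  show "continuous_on UNIV (\<lambda>(x, t). iter_partial ds (tanh_wave a b c d p) x t)"
    unfolding p' by (rule continuous_on_tanh_wave)
  show "(\<lambda>y. iter_partial ds (tanh_wave a b c d p) y t) differentiable at x"
    unfolding p' by (rule differentiableI_vector[OF tanh_wave_has_vector_derivative_x])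
  show "(\<lambda>y. iter_partial ds (tanh_wave a b c d p) x y) differentiable at t"
    unfolding p' by (rule differentiableI_vector[OF tanh_wave_has_vector_derivative_t])
qed

lemma tanh_wave_mult_reflect:
  "tanh_wave a b c d p x t * tanh_wave a b c d p (- x) (- t) = tanh_wave 0 0 c d (p * (p \<circ>\<^sub>p [:0, -1:])) x t"
proof -
  have "exp (\<i> * of_real (a * t + b * x)) * exp (\<i> * of_real (a * - t + b * - x)) = 1"
    by (simp add: exp_add[symmetric] algebra_simps)
  moreover have "tanh (c * - x + d * - t) = - tanh (c * x + d * t)"
    by (simp flip: tanh_minus)
  ultimately show ?thesis
    by (simp add: tanh_wave_def poly_pcompose mult_ac)
qed

lemma tanh_wave_even_reflect: "tanh_wave 0 0 c d [:u, 0, v:] (- x) (- t) = tanh_wave 0 0 c d [:u, 0, v:] x t"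
proof -
  have "tanh (c * - x + d * - t) = - tanh (c * x + d * t)"
    by (simp flip: tanh_minus)
  then show ?thesis
    by (simp add: tanh_wave_def)
qed

lemma tanh_wave_tendsto_at_top:
  assumes "c > 0"
  shows "((\<lambda>x. tanh_wave a b c d p x t - exp (\<i> * of_real (a * t + b * x)) * poly p 1) \<longlongrightarrow> 0) at_top"
    (is "(?f \<longlongrightarrow> 0) at_top")
proof (rule tendsto_norm_zero_cancel)
  have "((\<lambda>x. tanh (c * x + d * t)) \<longlongrightarrow> 1) at_top"
    using assms by real_asymp
  then have "((\<lambda>x. of_real (tanh (c * x + d * t)) :: complex) \<longlongrightarrow> 1) at_top"
    using tendsto_of_real by fastforce
  then have "((\<lambda>x. norm (poly p (of_real (tanh (c * x + d * t))) - poly p 1)) \<longlongrightarrow>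
      norm (poly p 1 - poly p 1)) at_top"
    by (intro tendsto_intros)
  then show "((\<lambda>x. norm (?f x)) \<longlongrightarrow> 0) at_top"
    by (simp add: tanh_wave_def norm_mult flip: right_diff_distrib)
qed

lemma tanh_wave_tendsto_at_bot:
  assumes "c > 0"
  shows "((\<lambda>x. tanh_wave a b c d p x t - exp (\<i> * of_real (a * t + b * x)) * poly p (- 1)) \<longlongrightarrow> 0) at_bot"
    (is "(?f \<longlongrightarrow> 0) at_bot")
proof (rule tendsto_norm_zero_cancel)
  have "((\<lambda>x. tanh (c * x + d * t)) \<longlongrightarrow> - 1) at_bot"
    using assms by real_asymp
  then have "((\<lambda>x. of_real (tanh (c * x + d * t)) :: complex) \<longlongrightarrow> - 1) at_bot"
    using tendsto_of_real by fastforce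
  then have "((\<lambda>x. norm (poly p (of_real (tanh (c * x + d * t))) - poly p (- 1))) \<longlongrightarrow>
      norm (poly p (- 1) - poly p (- 1))) at_bot"
    by (intro tendsto_intros)
  then show "((\<lambda>x. norm (?f x)) \<longlongrightarrow> 0) at_bot"
    by (simp add: tanh_wave_def norm_mult flip: right_diff_distrib)
qed

lemma has_integral_atLeast_of_deriv:
  fixes h H :: "real \<Rightarrow> real"
  assumes deriv: "\<And>y. (H has_real_derivative h y) (at y)"
    and nonneg: "\<And>y. a \<le> y \<Longrightarrow> 0 \<le> h y"
    and lim: "(H \<longlongrightarrow> L) at_top"
  shows "(h has_integral (L - H a)) {a..}"
proof (rule has_integral_to_inf)
  have finite: "(h has_integral (H y - H a)) {a..y}" if "a \<le> y" for y
    using that deriv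
    by (intro fundamental_theorem_of_calculus)
       (auto simp: has_real_derivative_iff_has_vector_derivative[symmetric] intro: DERIV_subset)
  show "h integrable_on {a..y}" for y
    by (cases "a \<le> y") (use finite in auto)
  have "\<forall>\<^sub>F y in at_top. H y - H a = integral {a..y} h"
    using eventually_ge_at_top[of a] by eventually_elim (metis finite integral_unique)
  moreover have "((\<lambda>y. H y - H a) \<longlongrightarrow> L - H a) at_top"
    by (intro tendsto_intros lim)
  ultimately show "((\<lambda>y. integral {a..y} h) \<longlongrightarrow> L - H a) at_top"
    by (rule Lim_transform_eventually[rotated])
qed (use nonneg in auto)

lemma tanh_sech_sq_has_integral:
  fixes c e a :: real
  assumes c: "c > 0"
  shows "((\<lambda>y. tanh (c * y + e) * (1 - tanh (c * y + e) ^ 2)) has_integral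
           (1 - tanh (c * a + e) ^ 2) / (2 * c)) {a..}"
proof -
  define T where "T y = tanh (c * y + e)" for y
  have T_bounds: "\<bar>T y\<bar> < 1" for y
    using tanh_real_lt_1 tanh_real_gt_neg1 by (simp add: T_def abs_less_iff)
  have T_deriv: "(T has_real_derivative c * (1 - T y ^ 2)) (at y)" for y
    unfolding T_def using cosh_real_pos[of "c * y + e"]
    by (auto intro!: derivative_eq_intros simp: field_simps power2_eq_square)
  have T_lim: "(T \<longlongrightarrow> 1) at_top"
    unfolding T_def using c by real_asymp
  have sech_sq_nonneg: "0 \<le> 1 - T y ^ 2" for y
    using T_bounds[of y] by (simp add: abs_square_le_1 less_imp_le)
  txt \<open>The integrand changes sign, so it is split as (1 + T)(1 - T^2) - (1 - T^2), a difference
    of two nonnegative functions with explicit antiderivatives.\<close>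
  have plus: "((\<lambda>y. (1 + T y) * (1 - T y ^ 2)) has_integral
      ((1 + 1 ^ 2 / 2) / c - (T a + T a ^ 2 / 2) / c)) {a..}"
  proof (rule has_integral_atLeast_of_deriv)
    show "((\<lambda>y. (T y + T y ^ 2 / 2) / c) has_real_derivative (1 + T y) * (1 - T y ^ 2)) (at y)" for y
      using c by (auto intro!: derivative_eq_intros T_deriv simp: field_simps power2_eq_square)
    show "0 \<le> (1 + T y) * (1 - T y ^ 2)" for y
      using T_bounds[of y] sech_sq_nonneg[of y] by simp
    show "((\<lambda>y. (T y + T y ^ 2 / 2) / c) \<longlongrightarrow> (1 + 1 ^ 2 / 2) / c) at_top"
      using c by (intro tendsto_intros T_lim) auto
  qed
  have minus: "((\<lambda>y. 1 - T y ^ 2) has_integral (1 / c - T a / c)) {a..}"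
  proof (rule has_integral_atLeast_of_deriv)
    show "((\<lambda>y. T y / c) has_real_derivative 1 - T y ^ 2) (at y)" for y
      using c by (auto intro!: derivative_eq_intros T_deriv)
  qed (use c sech_sq_nonneg in \<open>auto intro!: tendsto_intros T_lim\<close>)
  have "((\<lambda>y. (1 + T y) * (1 - T y ^ 2) - (1 - T y ^ 2)) has_integral
      ((1 + 1 ^ 2 / 2) / c - (T a + T a ^ 2 / 2) / c) - (1 / c - T a / c)) {a..}"
    by (rule has_integral_diff[OF plus minus])
  moreover have "(1 + 1 ^ 2 / 2) / c - (T a + T a ^ 2 / 2) / c - (1 / c - T a / c) = (1 - T a ^ 2) / (2 * c)"
    using c by (simp add: field_simps power2_eq_square)
  ultimately show ?thesis
    by (simp add: T_def algebra_simps)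
qed

lemma exp_i_of_real_add:
  "exp (\<i> * of_real (a + b)) = exp (\<i> * of_real a) * (of_real (cos b) + \<i> * of_real (sin b))"
  by (simp add: distrib_left exp_add exp_Euler[of "of_real b"] cos_of_real sin_of_real)

locale tanh_soliton =
  fixes q0 \<alpha> \<beta> \<theta> :: real
  assumes q0_pos: "0 < q0"
    and sin_pos: "0 < sin \<theta>"
    and beta_ne: "\<beta> \<noteq> 2 * q0 * cos \<theta>"
begin

definition k :: real where "k = q0 * sin \<theta>"

definition w :: real where "w = - k * \<alpha> / (\<beta> - 2 * q0 * cos \<theta>)"

definition soliton_poly :: "complex poly" where
  "soliton_poly = [:of_real (q0 * cos \<theta>), \<i> * of_real k:]"

definition potential_poly :: "complex poly" where
  "potential_poly = [:of_real (\<alpha> * \<beta> / 2 + w * k), 0, - of_real (w * k):]"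

abbreviation soliton :: "real \<Rightarrow> real \<Rightarrow> complex" where
  "soliton \<equiv> tanh_wave \<alpha> \<beta> k w soliton_poly"

abbreviation density :: "real \<Rightarrow> real \<Rightarrow> complex" where
  "density \<equiv> tanh_wave 0 0 k w (soliton_poly * (soliton_poly \<circ>\<^sub>p [:0, -1:]))"

abbreviation potential :: "real \<Rightarrow> real \<Rightarrow> complex" where
  "potential \<equiv> tanh_wave 0 0 k w potential_poly"

lemma k_pos: "0 < k"
  using q0_pos sin_pos by (simp add: k_def)

lemma w_speed: "w * (\<beta> - 2 * q0 * cos \<theta>) = - k * \<alpha>"
  using beta_ne by (simp add: w_def)

lemma soliton_formula:
  "(\<lambda>x t. of_real q0 * exp (\<i> * of_real (\<alpha> * t + \<beta> * x)) *
      (of_real (cos \<theta>) + \<i> * of_real (sin \<theta>) *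
       of_real (tanh (q0 * sin \<theta> * (x - \<alpha> * t / (\<beta> - 2 * q0 * cos \<theta>)))))) = soliton"
proof (intro ext)
  fix x t
  have "q0 * sin \<theta> * (x - \<alpha> * t / (\<beta> - 2 * q0 * cos \<theta>)) = k * x + w * t"
    using beta_ne by (simp add: k_def w_def field_simps)
  then show "of_real q0 * exp (\<i> * of_real (\<alpha> * t + \<beta> * x)) *
      (of_real (cos \<theta>) + \<i> * of_real (sin \<theta>) *
       of_real (tanh (q0 * sin \<theta> * (x - \<alpha> * t / (\<beta> - 2 * q0 * cos \<theta>))))) = soliton x t"
    by (simp add: tanh_wave_def soliton_poly_def k_def algebra_simps)
qed

lemma density_poly_eq:
  "soliton_poly * (soliton_poly \<circ>\<^sub>p [:0, -1:]) = [:of_real ((q0 * cos \<theta>) ^ 2), 0, of_real (k ^ 2):]"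
  by (simp add: soliton_poly_def pcompose_pCons algebra_simps power2_eq_square)

lemma partial_t_density:
  "partial_t density y t =
     of_real (2 * w * k ^ 2 * (tanh (k * y + w * t) * (1 - tanh (k * y + w * t) ^ 2)))"
  by (simp add: partial_t_tanh_wave density_poly_eq tanh_wave_def wave_deriv_poly_def
      pderiv_pCons algebra_simps power2_eq_square)

lemma partial_t_density_has_integral:
  "((\<lambda>y. partial_t density y t) has_integral of_real (w * k * (1 - tanh (k * x + w * t) ^ 2))) {x..}"
proof -
  have "2 * w * k ^ 2 * ((1 - tanh (k * x + w * t) ^ 2) / (2 * k)) = w * k * (1 - tanh (k * x + w * t) ^ 2)"
    using k_pos by (simp add: power2_eq_square)
  moreover have "((\<lambda>y. 2 * w * k ^ 2 * (tanh (k * y + w * t) * (1 - tanh (k * y + w * t) ^ 2))) has_integral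
      2 * w * k ^ 2 * ((1 - tanh (k * x + w * t) ^ 2) / (2 * k))) {x..}"
    by (intro has_integral_mult_right tanh_sech_sq_has_integral k_pos)
  ultimately have "((\<lambda>y. 2 * w * k ^ 2 * (tanh (k * y + w * t) * (1 - tanh (k * y + w * t) ^ 2))) has_integral
      w * k * (1 - tanh (k * x + w * t) ^ 2)) {x..}"
    by simp
  from has_integral_of_real[OF this] show ?thesis
    unfolding partial_t_density .
qed

lemma potential_formula:
  "(\<lambda>x t. integral {x..} (\<lambda>y. partial_t density y t) + of_real (\<alpha> * \<beta> / 2)) = potential"
  by (intro ext) (simp add: integral_unique[OF partial_t_density_has_integral] tanh_wave_def
      potential_poly_def algebra_simps power2_eq_square)

lemma soliton_poly_equation:
  "wave_deriv_poly \<alpha> w (wave_deriv_poly \<beta> k soliton_poly) + smult 2 (potential_poly * soliton_poly) = 0"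
proof -
  have "of_real w * (of_real \<beta> - 2 * of_real q0 * of_real (cos \<theta>)) = - (of_real k * of_real \<alpha> :: complex)"
    using arg_cong[OF w_speed, of "of_real :: real \<Rightarrow> complex"] by simp
  then show ?thesis
    by (simp add: wave_deriv_poly_def soliton_poly_def potential_poly_def pderiv_pCons algebra_simps)
       algebra
qed

lemma soliton_equation: "partial_t (partial_x soliton) x t + 2 * potential x t * soliton x t = 0"
proof -
  have "partial_t (partial_x soliton) x t + 2 * potential x t * soliton x t =
      tanh_wave \<alpha> \<beta> k w (wave_deriv_poly \<alpha> w (wave_deriv_poly \<beta> k soliton_poly)
        + smult 2 (potential_poly * soliton_poly)) x t"
    by (simp add: partial_x_tanh_wave partial_t_tanh_wave tanh_wave_def algebra_simps)
  then show ?thesis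
    by (simp add: soliton_poly_equation tanh_wave_def)
qed

lemma partial_x_potential: "partial_x potential x t = - partial_t density x t"
  by (simp add: partial_x_tanh_wave partial_t_tanh_wave density_poly_eq tanh_wave_def
      wave_deriv_poly_def potential_poly_def pderiv_pCons algebra_simps power2_eq_square)

lemma potential_reflect: "potential (- x) (- t) = potential x t"
  unfolding potential_poly_def by (rule tanh_wave_even_reflect)

lemma potential_tendsto: "((\<lambda>x. potential x t) \<longlongrightarrow> of_real (\<alpha> * \<beta> / 2)) at_infinity"
proof -
  have at_one: "poly potential_poly 1 = of_real (\<alpha> * \<beta> / 2)"
    and at_minus_one: "poly potential_poly (- 1) = of_real (\<alpha> * \<beta> / 2)"
    by (simp_all add: potential_poly_def)
  have "((\<lambda>x. potential x t) \<longlongrightarrow> poly potential_poly 1) at_top"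
    using tanh_wave_tendsto_at_top[OF k_pos, of 0 0 w potential_poly t] by (simp add: LIM_zero_iff)
  moreover have "((\<lambda>x. potential x t) \<longlongrightarrow> poly potential_poly (- 1)) at_bot"
    using tanh_wave_tendsto_at_bot[OF k_pos, of 0 0 w potential_poly t] by (simp add: LIM_zero_iff)
  ultimately show ?thesis
    unfolding at_infinity_eq_at_top_bot at_one at_minus_one by (rule filterlim_sup)
qed

lemma soliton_tendsto_at_top:
  "((\<lambda>x. soliton x t - of_real q0 * exp (\<i> * of_real (\<alpha> * t + \<beta> * x + \<theta>))) \<longlongrightarrow> 0) at_top"
proof -
  have "of_real q0 * exp (\<i> * of_real (\<alpha> * t + \<beta> * x + \<theta>)) =
      exp (\<i> * of_real (\<alpha> * t + \<beta> * x)) * poly soliton_poly 1" for x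
    by (simp only: exp_i_of_real_add) (simp add: soliton_poly_def k_def algebra_simps)
  then show ?thesis
    using tanh_wave_tendsto_at_top[OF k_pos, of \<alpha> \<beta> w soliton_poly t] by simp
qed

lemma soliton_tendsto_at_bot:
  "((\<lambda>x. soliton x t - of_real q0 * exp (\<i> * of_real (\<alpha> * t + \<beta> * x - \<theta>))) \<longlongrightarrow> 0) at_bot"
proof -
  have "of_real q0 * exp (\<i> * of_real (\<alpha> * t + \<beta> * x + - \<theta>)) =
      exp (\<i> * of_real (\<alpha> * t + \<beta> * x)) * poly soliton_poly (- 1)" for x
    by (simp only: exp_i_of_real_add) (simp add: soliton_poly_def k_def algebra_simps)
  then show ?thesis
    using tanh_wave_tendsto_at_bot[OF k_pos, of \<alpha> \<beta> w soliton_poly t] by simp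
qed

end

theorem mainTheorem13:
  fixes q0 \<alpha> \<beta> \<theta> :: real
    and q P s :: "real \<Rightarrow> real \<Rightarrow> complex"
  assumes q0_pos: "q0 > 0"
    and theta: "0 < \<theta>" "\<theta> < pi"
    and beta: "\<beta> \<noteq> 2 * q0 * cos \<theta>"
    and q_def: "q = (\<lambda>x t. of_real q0 * exp (\<i> * of_real (\<alpha> * t + \<beta> * x)) *
                  (of_real (cos \<theta>) + \<i> * of_real (sin \<theta>) *
                   of_real (tanh (q0 * sin \<theta> * (x - \<alpha> * t / (\<beta> - 2 * q0 * cos \<theta>))))))"
    and P_def: "P = (\<lambda>x t. q x t * q (- x) (- t))"
    and s_def: "s = (\<lambda>x t. integral {x..} (\<lambda>y. partial_t P y t) + of_real (\<alpha> * \<beta> / 2))"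
  shows "(\<forall>x t. (\<lambda>y. partial_t P y t) integrable_on {x..})
    \<and> smooth2 q \<and> smooth2 s
    \<and> (\<forall>x t. partial_t (partial_x q) x t + 2 * s x t * q x t = 0)
    \<and> (\<forall>x t. partial_x s x t = - partial_t P x t)
    \<and> (\<forall>x t. s (- x) (- t) = s x t)
    \<and> (\<forall>t. ((\<lambda>x. s x t) \<longlongrightarrow> of_real (\<alpha> * \<beta> / 2)) at_infinity)
    \<and> (\<forall>t. ((\<lambda>x. q x t - of_real q0 * exp (\<i> * of_real (\<alpha> * t + \<beta> * x + \<theta>))) \<longlongrightarrow> 0) at_top)
    \<and> (\<forall>t. ((\<lambda>x. q x t - of_real q0 * exp (\<i> * of_real (\<alpha> * t + \<beta> * x - \<theta>))) \<longlongrightarrow> 0) at_bot)"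
proof -
  interpret tanh_soliton q0 \<alpha> \<beta> \<theta>
    using q0_pos theta beta by unfold_locales (simp_all add: sin_gt_zero)
  have q: "q = soliton"
    unfolding q_def by (rule soliton_formula)
  have P: "P = density"
    unfolding P_def q by (intro ext) (rule tanh_wave_mult_reflect)
  have s: "s = potential"
    unfolding s_def P by (rule potential_formula)
  show ?thesis
    unfolding q P s
    using partial_t_density_has_integral soliton_equation partial_x_potential potential_reflect
      potential_tendsto soliton_tendsto_at_top soliton_tendsto_at_bot
    by (auto simp: smooth2_tanh_wave)
qed

end
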